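(* Let $f:\mathbb{R}^d\to\mathbb{R}$ be convex and differentiable, let $h:\mathbb{R}^d\to\mathbb{R}\cup\{+\infty\}$ be proper, closed and convex, let $x\in\mathbb{R}^d$, $\lambda>0$, write $G=G^{f}_{\lambda h}(x)$ and $x^+=x-\lambda G$. If $$f(x-2\lambda G)\le f(x-\lambda G)-\lambda\langle G,\nabla f(x)\rangle+\tfrac{\lambda}{2}\|G\|^2,$$ then $$\Big\langle x^+-x,\;\nabla f(x^+)-\nabla f(x)+\tfrac12 G\Big\rangle\le 0 .$$
   Context: $\mathbb{R}^d$ carries the standard inner product $\langle\cdot,\cdot\rangle$ and Euclidean norm $\|\cdot\|$. For $\lambda>0$ the proximal operator is $\mathrm{prox}_{\lambda h}(w)=\arg\min_{u\in\mathbb{R}^d}\big\{\lambda h(u)+\tfrac12\|u-w\|^2\big\}$. The gradient mapping is $G^{f}_{\lambda h}(x)=\frac{1}{\lambda}\Big(x-\mathrm{prox}_{\lambda h}\big(x-\lambda\nabla f(x)\big)\Big)$. *)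

theory Defs
  imports "HOL-Analysis.Analysis" "HOL-Library.Extended_Real"
begin

definition ext_epigraph :: "('a \<Rightarrow> ereal) \<Rightarrow> ('a \<times> real) set" where
  "ext_epigraph h = {(x, t). h x \<le> ereal t}"

definition proper_fun :: "('a \<Rightarrow> ereal) \<Rightarrow> bool" where
  "proper_fun h \<longleftrightarrow> (\<forall>x. h x \<noteq> -\<infinity>) \<and> (\<exists>x. h x \<noteq> \<infinity>)"

definition closed_fun :: "('a::topological_space \<Rightarrow> ereal) \<Rightarrow> bool" where
  "closed_fun h \<longleftrightarrow> closed (ext_epigraph h)"

definition convex_fun :: "('a::real_vector \<Rightarrow> ereal) \<Rightarrow> bool" where
  "convex_fun h \<longleftrightarrow> convex (ext_epigraph h)"

definition prox :: "real \<Rightarrow> ('a::real_normed_vector \<Rightarrow> ereal) \<Rightarrow> 'a \<Rightarrow> 'a" where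
  "prox lam h w = (SOME u. \<forall>v. ereal lam * h u + ereal ((norm (u - w))\<^sup>2 / 2)
                              \<le> ereal lam * h v + ereal ((norm (v - w))\<^sup>2 / 2))"

text \<open>Gradient mapping, with the gradient of f supplied as the function gf.\<close>
definition grad_map :: "('a \<Rightarrow> 'a) \<Rightarrow> real \<Rightarrow> ('a::real_normed_vector \<Rightarrow> ereal) \<Rightarrow> 'a \<Rightarrow> 'a" where
  "grad_map gf lam h x = (1 / lam) *\<^sub>R (x - prox lam h (x - lam *\<^sub>R gf x))"

end

theory Submission
  imports Defs
begin

text \<open>Only the convexity of \<open>f\<close> matters: the conclusion holds with \<open>G\<close> replaced by an arbitrary
vector. Put \<open>x\<^sup>+ = x - \<lambda>G\<close>. The gradient inequality at \<open>x\<^sup>+\<close> gives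
\<open>f(x - 2\<lambda>G) \<ge> f(x\<^sup>+) - \<lambda>\<langle>G, \<nabla>f(x\<^sup>+)\<rangle>\<close>; combined with the hypothesis this yields
\<open>\<lambda>\<langle>G, \<nabla>f(x) - \<nabla>f(x\<^sup>+)\<rangle> \<le> \<lambda>/2 \<parallel>G\<parallel>\<^sup>2\<close>, which is the claim since \<open>x\<^sup>+ - x = -\<lambda>G\<close>.\<close>

lemma convex_on_line:
  fixes f :: "'a::real_vector \<Rightarrow> real" and c v :: 'a
  assumes "convex_on UNIV f"
  shows "convex_on UNIV (\<lambda>t::real. f (c + t *\<^sub>R v))"
proof (rule convex_onI)
  fix t s u :: real
  assume "0 < t" "t < 1"
  have "c + ((1 - t) * s + t * u) *\<^sub>R v = (1 - t) *\<^sub>R (c + s *\<^sub>R v) + t *\<^sub>R (c + u *\<^sub>R v)"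
    by (simp add: algebra_simps flip: scaleR_add_left)
  then show "f (c + ((1 - t) *\<^sub>R s + t *\<^sub>R u) *\<^sub>R v)
             \<le> (1 - t) * f (c + s *\<^sub>R v) + t * f (c + u *\<^sub>R v)"
    using convex_onD[OF assms, of t "c + s *\<^sub>R v" "c + u *\<^sub>R v"] \<open>0 < t\<close> \<open>t < 1\<close> by simp
qed simp

lemma convex_on_gradient_inequality:
  fixes f :: "'a::real_inner \<Rightarrow> real"
  assumes convex: "convex_on UNIV f" and grad: "GDERIV f c :> g"
  shows "f c + inner g (y - c) \<le> f y"
proof -
  define \<phi> where "\<phi> = (\<lambda>t::real. f (c + t *\<^sub>R (y - c)))"
  have "((\<lambda>t::real. c + t *\<^sub>R (y - c)) has_derivative (\<lambda>t. t *\<^sub>R (y - c))) (at 0)"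
    by (auto intro!: derivative_eq_intros)
  moreover have "(f has_derivative (\<lambda>h. inner h g)) (at (c + 0 *\<^sub>R (y - c)))"
    using grad by (simp add: gderiv_def)
  ultimately have "(\<phi> has_derivative (\<lambda>t. inner g (y - c) * t)) (at 0)"
    unfolding \<phi>_def by (rule has_derivative_compose[THEN has_derivative_eq_rhs]) (auto simp: inner_commute)
  then have "(\<phi> has_field_derivative inner g (y - c)) (at 0)"
    by (simp add: has_field_derivative_def)
  then have "inner g (y - c) * (1 - 0) \<le> \<phi> 1 - \<phi> 0"
    by (intro convex_on_imp_above_tangent[OF convex_on_line[OF convex, of c "y - c", folded \<phi>_def]]) auto
  then show ?thesis
    by (simp add: \<phi>_def)
qed

lemma descent_condition_imp_inner_nonpos:
  fixes f :: "'a::real_inner \<Rightarrow> real" and gf :: "'a \<Rightarrow> 'a"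
  assumes convex: "convex_on UNIV f" and grad: "GDERIV f (x - lam *\<^sub>R G) :> gf (x - lam *\<^sub>R G)"
    and descent: "f (x - (2 * lam) *\<^sub>R G)
                  \<le> f (x - lam *\<^sub>R G) - lam * inner G (gf x) + lam / 2 * (norm G)\<^sup>2"
  shows "inner ((x - lam *\<^sub>R G) - x) (gf (x - lam *\<^sub>R G) - gf x + (1/2) *\<^sub>R G) \<le> 0"
proof -
  define xp where "xp = x - lam *\<^sub>R G"
  have "x - (2 * lam) *\<^sub>R G - xp = - lam *\<^sub>R G"
    by (simp add: xp_def algebra_simps flip: scaleR_add_left)
  then have tangent: "f xp - lam * inner (gf xp) G \<le> f (x - (2 * lam) *\<^sub>R G)"
    using convex_on_gradient_inequality[OF convex grad, of "x - (2 * lam) *\<^sub>R G"]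
    by (simp add: xp_def)
  have "inner (xp - x) (gf xp - gf x + (1/2) *\<^sub>R G)
        = lam * inner G (gf x) - lam * inner (gf xp) G - lam / 2 * (norm G)\<^sup>2"
    by (simp add: xp_def inner_diff_right inner_add_right power2_norm_eq_inner
        inner_commute algebra_simps)
  also have "\<dots> \<le> 0"
    using tangent descent by (simp add: xp_def)
  finally show ?thesis
    by (simp add: xp_def)
qed

theorem lemma2p1:
  fixes f :: "'a::euclidean_space \<Rightarrow> real" and gf :: "'a \<Rightarrow> 'a"
    and h :: "'a \<Rightarrow> ereal" and x :: 'a and lam :: real
  assumes f_convex: "convex_on UNIV f"
    and f_grad: "\<And>y. GDERIV f y :> gf y"
    and h_proper: "proper_fun h" and h_closed: "closed_fun h" and h_convex: "convex_fun h"
    and lam_pos: "lam > 0"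
    and cond: "f (x - (2 * lam) *\<^sub>R grad_map gf lam h x)
               \<le> f (x - lam *\<^sub>R grad_map gf lam h x) - lam * inner (grad_map gf lam h x) (gf x)
                 + lam / 2 * (norm (grad_map gf lam h x))\<^sup>2"
  shows "inner ((x - lam *\<^sub>R grad_map gf lam h x) - x)
           (gf (x - lam *\<^sub>R grad_map gf lam h x) - gf x + (1/2) *\<^sub>R grad_map gf lam h x) \<le> 0"
  using descent_condition_imp_inner_nonpos[OF f_convex f_grad cond] .

end
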